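(* Let $G$ and $H$ be threshold graphs. Then $G$ is (isomorphic to) an induced subgraph of $H$ if and only if $\mathrm{seq}(G)$ is a subsequence (not necessarily of consecutive digits) of $\mathrm{seq}(H)$.
   Context: A threshold graph on $n\ge 1$ vertices is built from a single base vertex $v_0$ by successively adding vertices $v_1,\dots,v_{n-1}$, where each new vertex $v_i$ is added either as an isolated vertex (adjacent to none of $v_0,\dots,v_{i-1}$) or as a dominating vertex (adjacent to all of $v_0,\dots,v_{i-1}$). The creation sequence $\mathrm{seq}(G)=s_1s_2\cdots s_{n-1}$ is the binary string with $s_i=1$ if $v_i$ was added as a dominating vertex and $s_i=0$ if added as an isolated vertex. Every unlabeled threshold graph on $n$ vertices arises from exactly one binary string of length $n-1$ in this way. *)

theory Defs
  imports Main "HOL-Library.Sublist"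
begin

text \<open>Creation sequences are bool lists; True = 1 (dominating), False = 0 (isolated).
  The vertex v_i (i \<ge> 1) corresponds to entry s ! (i - 1).  Two distinct vertices
  v_i, v_j are adjacent iff the later one (index max i j) was added as dominating.\<close>

definition thr_adj :: "bool list \<Rightarrow> nat \<Rightarrow> nat \<Rightarrow> bool" where
  "thr_adj s i j \<longleftrightarrow> i \<noteq> j \<and> s ! (max i j - 1)"

definition creation_seq :: "'a set \<Rightarrow> ('a \<Rightarrow> 'a \<Rightarrow> bool) \<Rightarrow> bool list \<Rightarrow> bool" where
  "creation_seq V E s \<longleftrightarrow>
     (\<exists>f. bij_betw f {0..length s} V \<and>
          (\<forall>i\<in>{0..length s}. \<forall>j\<in>{0..length s}. E (f i) (f j) \<longleftrightarrow> thr_adj s i j))"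

definition induced_subgraph_iso ::
  "'a set \<Rightarrow> ('a \<Rightarrow> 'a \<Rightarrow> bool) \<Rightarrow> 'b set \<Rightarrow> ('b \<Rightarrow> 'b \<Rightarrow> bool) \<Rightarrow> bool" where
  "induced_subgraph_iso V E W F \<longleftrightarrow>
     (\<exists>f. inj_on f V \<and> f ` V \<subseteq> W \<and> (\<forall>u\<in>V. \<forall>v\<in>V. E u v \<longleftrightarrow> F (f u) (f v)))"

end

theory Submission
  imports Defs "HOL-Combinatorics.Transposition"
begin

text \<open>Both graphs may be replaced by the threshold graphs built from their creation sequences.
  A subsequence of t selects vertices of the graph of t spanning a copy of the graph of s, with
  v_0 sent to v_0: appending the same bit to both sequences extends such an embedding by sending
  the new vertex to the new vertex. Conversely, take an embedding of the graph of s @ [b] into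
  that of t and the vertex j sent to the largest vertex v_M in the image. Inside the image v_M is
  joined to all or to none of the others according to t ! (M - 1), so j is a dominating or
  isolated vertex, as is the last vertex; hence t ! (M - 1) = b and the transposition of j and
  the last vertex is an automorphism. After composing with it, the remaining vertices land in
  v_0, ..., v_(M-1), and induction gives s as a subsequence of take (M - 1) t.\<close>

lemma induced_subgraph_iso_trans:
  assumes "induced_subgraph_iso U D V E" and "induced_subgraph_iso V E W F"
  shows "induced_subgraph_iso U D W F"
proof -
  obtain g where g: "inj_on g U" "g ` U \<subseteq> V" "\<forall>u\<in>U. \<forall>v\<in>U. D u v \<longleftrightarrow> E (g u) (g v)"
    using assms(1) unfolding induced_subgraph_iso_def by blast
  obtain h where h: "inj_on h V" "h ` V \<subseteq> W" "\<forall>u\<in>V. \<forall>v\<in>V. E u v \<longleftrightarrow> F (h u) (h v)"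
    using assms(2) unfolding induced_subgraph_iso_def by blast
  have "inj_on (h \<circ> g) U" using g(1,2) h(1) by (metis comp_inj_on inj_on_subset)
  moreover have "(h \<circ> g) ` U \<subseteq> W" using g(2) h(2) by auto
  moreover have "\<forall>u\<in>U. \<forall>v\<in>U. D u v \<longleftrightarrow> F ((h \<circ> g) u) ((h \<circ> g) v)"
    using g(2,3) h(3) by (simp add: image_subset_iff)
  ultimately show ?thesis unfolding induced_subgraph_iso_def by (intro exI conjI)
qed

lemma bij_betw_induced_subgraph_iso:
  assumes "bij_betw f V W" and "\<forall>u\<in>V. \<forall>v\<in>V. E u v \<longleftrightarrow> F (f u) (f v)"
  shows "induced_subgraph_iso V E W F" and "induced_subgraph_iso W F V E"
proof -
  show "induced_subgraph_iso V E W F"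
    using assms unfolding induced_subgraph_iso_def bij_betw_def by blast
  have "bij_betw (inv_into V f) W V" using assms(1) by (rule bij_betw_inv_into)
  moreover have "\<forall>u\<in>W. \<forall>v\<in>W. F u v \<longleftrightarrow> E (inv_into V f u) (inv_into V f v)"
  proof (intro ballI)
    fix u v assume "u \<in> W" "v \<in> W"
    then have "inv_into V f u \<in> V" "inv_into V f v \<in> V"
      "f (inv_into V f u) = u" "f (inv_into V f v) = v"
      using assms(1) by (auto intro: bij_betw_apply[OF \<open>bij_betw (inv_into V f) W V\<close>]
          bij_betw_inv_into_right)
    then show "F u v \<longleftrightarrow> E (inv_into V f u) (inv_into V f v)" using assms(2) by metis
  qed
  ultimately show "induced_subgraph_iso W F V E"
    unfolding induced_subgraph_iso_def bij_betw_def by blast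
qed

lemma transpose_preserves_rel:
  assumes "symp E" and "E j j = E k k" and "\<And>i. i \<in> A \<Longrightarrow> i \<noteq> j \<Longrightarrow> i \<noteq> k \<Longrightarrow> E i j = E i k"
    and "a \<in> A" and "c \<in> A"
  shows "E (transpose j k a) (transpose j k c) = E a c"
proof -
  have sym: "E x y = E y x" for x y
    using assms(1) by (meson sympD)
  have swap_right: "E x (transpose j k y) = E x y" if "x \<in> A" "x \<noteq> j" "x \<noteq> k" for x y
    using assms(3)[OF that] by (simp add: transpose_def)
  have swap_left: "E (transpose j k x) y = E x y" if "y \<in> A" "y \<noteq> j" "y \<noteq> k" for x y
    using swap_right[OF that, of x] sym by metis
  consider "a \<noteq> j" "a \<noteq> k" | "c \<noteq> j" "c \<noteq> k" | "a \<in> {j, k}" "c \<in> {j, k}"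
    by blast
  then show ?thesis
  proof cases
    case 1
    then show ?thesis using swap_right[OF assms(4) 1] by simp
  next
    case 2
    then show ?thesis using swap_left[OF assms(5) 2] by simp
  next
    case 3
    then have "a = j \<or> a = k" "c = j \<or> c = k" by simp_all
    then show ?thesis using assms(2) sym[of j k] by (elim disjE) simp_all
  qed
qed

lemma thr_adj_sym: "thr_adj s i j = thr_adj s j i"
  unfolding thr_adj_def by (auto simp: max.commute)

lemma thr_adj_irrefl [simp]: "\<not> thr_adj s i i"
  unfolding thr_adj_def by simp

lemma thr_adj_take: "i \<le> n \<Longrightarrow> j \<le> n \<Longrightarrow> thr_adj (take n s) i j = thr_adj s i j"
  unfolding thr_adj_def by (auto simp: max_def)

lemma thr_adj_snoc: "i \<le> length s \<Longrightarrow> j \<le> length s \<Longrightarrow> thr_adj (s @ [b]) i j = thr_adj s i j"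
  using thr_adj_take[of i "length s" j "s @ [b]"] by simp

lemma thr_adj_snoc_last: "i \<le> length s \<Longrightarrow> thr_adj (s @ [b]) i (Suc (length s)) = b"
  unfolding thr_adj_def by (simp add: max_def)

lemma thr_adj_max: "i < j \<Longrightarrow> thr_adj s i j = s ! (j - 1)"
  unfolding thr_adj_def by (simp add: max_def)

definition thr_embedding :: "bool list \<Rightarrow> bool list \<Rightarrow> (nat \<Rightarrow> nat) \<Rightarrow> bool" where
  "thr_embedding s t f \<longleftrightarrow> inj_on f {0..length s} \<and> f ` {0..length s} \<subseteq> {0..length t} \<and>
     (\<forall>i\<in>{0..length s}. \<forall>j\<in>{0..length s}. thr_adj s i j \<longleftrightarrow> thr_adj t (f i) (f j))"

lemma induced_subgraph_iso_thr_iff: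
  "induced_subgraph_iso {0..length s} (thr_adj s) {0..length t} (thr_adj t) \<longleftrightarrow> (\<exists>f. thr_embedding s t f)"
  unfolding induced_subgraph_iso_def thr_embedding_def ..

lemma thr_embedding_butlast:
  "thr_embedding (s @ [b]) t f \<Longrightarrow> thr_embedding s t f"
  unfolding thr_embedding_def
  by (fastforce simp: subset_iff intro: inj_on_subset dest: thr_adj_snoc[of _ s _ b])

lemma thr_embedding_take:
  assumes "thr_embedding s t f" and "f ` {0..length s} \<subseteq> {0..n}"
  shows "thr_embedding s (take n t) f"
  using assms unfolding thr_embedding_def by (auto simp: thr_adj_take subset_iff)

lemma thr_embedding_snoc_right:
  "thr_embedding s t f \<Longrightarrow> thr_embedding s (t @ [c]) f"
  unfolding thr_embedding_def by (auto simp: thr_adj_snoc subset_iff)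

lemma thr_embedding_snoc:
  assumes "thr_embedding s t f"
  shows "thr_embedding (s @ [c]) (t @ [c]) (f(Suc (length s) := Suc (length t)))"
    (is "thr_embedding _ _ ?g")
proof -
  have inj: "inj_on f {0..length s}" and img: "\<And>i. i \<le> length s \<Longrightarrow> f i \<le> length t"
    and adj: "\<And>i j. i \<le> length s \<Longrightarrow> j \<le> length s \<Longrightarrow> thr_adj s i j \<longleftrightarrow> thr_adj t (f i) (f j)"
    using assms unfolding thr_embedding_def by (auto simp: image_subset_iff)
  have "inj_on ?g {0..length (s @ [c])}"
    using inj img by (fastforce simp: inj_on_def le_Suc_eq)
  moreover have "?g ` {0..length (s @ [c])} \<subseteq> {0..length (t @ [c])}"
    using img by (auto simp: le_Suc_eq)
  moreover have "thr_adj (s @ [c]) i j \<longleftrightarrow> thr_adj (t @ [c]) (?g i) (?g j)"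
    if ij: "i \<le> Suc (length s)" "j \<le> Suc (length s)" for i j
  proof -
    consider "i \<le> length s" "j \<le> length s" | "i \<le> length s" "j = Suc (length s)"
      | "i = Suc (length s)" "j \<le> length s" | "i = Suc (length s)" "j = Suc (length s)"
      using ij by (metis le_Suc_eq)
    then show ?thesis
    proof cases
      case 1
      then show ?thesis using adj img by (simp add: thr_adj_snoc)
    next
      case 2
      then show ?thesis using img[of i] by (simp add: thr_adj_snoc_last)
    next
      case 3
      then show ?thesis
        using img[of j] thr_adj_sym[of "s @ [c]" i j] thr_adj_sym[of "t @ [c]" "Suc (length t)" "f j"]
        by (simp add: thr_adj_snoc_last)
    next
      case 4
      then show ?thesis by simp
    qed
  qed
  ultimately show ?thesis
    unfolding thr_embedding_def by auto
qed

lemma subseq_imp_thr_embedding: "subseq s t \<Longrightarrow> \<exists>f. thr_embedding s t f"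
proof (induction t arbitrary: s rule: rev_induct)
  case Nil
  then have "s = []" by (rule list_emb_Nil2)
  then have "thr_embedding s [] id" by (simp add: thr_embedding_def)
  then show ?case by blast
next
  case (snoc c t)
  from snoc.prems obtain s1 s2 where s: "s = s1 @ s2" "subseq s1 t" "subseq s2 [c]"
    by (auto simp: subseq_append_iff)
  obtain f where f: "thr_embedding s1 t f"
    using snoc.IH[OF \<open>subseq s1 t\<close>] by blast
  from \<open>subseq s2 [c]\<close> have "s2 = [] \<or> s2 = [c]"
    by (cases s2) (auto split: if_splits dest: list_emb_Nil2)
  then show ?case
  proof
    assume "s2 = []"
    then show ?case using s(1) thr_embedding_snoc_right[OF f] by auto
  next
    assume "s2 = [c]"
    then show ?case using s(1) thr_embedding_snoc[OF f] by auto
  qed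
qed

lemma thr_embedding_transpose_twins:
  assumes "thr_embedding s t f" and "j \<le> length s" and "k \<le> length s"
    and "\<And>i. i \<le> length s \<Longrightarrow> i \<noteq> j \<Longrightarrow> i \<noteq> k \<Longrightarrow> thr_adj s i j = thr_adj s i k"
  shows "thr_embedding s t (f \<circ> transpose j k)"
  unfolding thr_embedding_def
proof (intro conjI ballI)
  let ?A = "{0..length s}"
  have emb: "inj_on f ?A" "f ` ?A \<subseteq> {0..length t}"
    "\<And>i j. i \<in> ?A \<Longrightarrow> j \<in> ?A \<Longrightarrow> thr_adj s i j \<longleftrightarrow> thr_adj t (f i) (f j)"
    using assms(1) unfolding thr_embedding_def by auto
  have perm: "transpose j k ` ?A = ?A" using assms(2,3) by simp
  show "inj_on (f \<circ> transpose j k) ?A"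
    using comp_inj_on[OF inj_on_transpose, of f j k ?A] perm emb(1) by simp
  show "(f \<circ> transpose j k) ` ?A \<subseteq> {0..length t}"
    using perm emb(2) by (metis image_comp)
  fix a c assume "a \<in> ?A" "c \<in> ?A"
  have "symp (thr_adj s)" using thr_adj_sym by (blast intro: sympI)
  then have "thr_adj s (transpose j k a) (transpose j k c) = thr_adj s a c"
    using assms(4) \<open>a \<in> ?A\<close> \<open>c \<in> ?A\<close> by (intro transpose_preserves_rel[where A = ?A]) auto
  moreover have "transpose j k a \<in> ?A" "transpose j k c \<in> ?A"
    using perm \<open>a \<in> ?A\<close> \<open>c \<in> ?A\<close> by blast+
  ultimately show "thr_adj s a c \<longleftrightarrow> thr_adj t ((f \<circ> transpose j k) a) ((f \<circ> transpose j k) c)"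
    using emb(3) by simp
qed

lemma thr_embedding_last_to_max:
  assumes "thr_embedding (s @ [b]) t f"
  obtains g where "thr_embedding (s @ [b]) t g"
    and "\<And>i. i \<le> length s \<Longrightarrow> g i < g (Suc (length s))"
    and "t ! (g (Suc (length s)) - 1) = b"
proof -
  define k where "k = Suc (length s)"
  define A where "A = {0..k}"
  have emb: "inj_on f A"
    "\<And>i j. i \<in> A \<Longrightarrow> j \<in> A \<Longrightarrow> thr_adj (s @ [b]) i j \<longleftrightarrow> thr_adj t (f i) (f j)"
    using assms unfolding thr_embedding_def A_def k_def by auto
  have "k \<in> A" "0 \<in> A" "k \<noteq> 0" by (simp_all add: A_def k_def)
  obtain j where "j \<in> A" and j_max: "\<And>i. i \<in> A \<Longrightarrow> f i \<le> f j"
    using Max_in[of "f ` A"] Max_ge[of "f ` A"] by (fastforce simp: A_def)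
  define M where "M = f j"
  have below_M: "f i < M" if "i \<in> A" "i \<noteq> j" for i
    using j_max[OF that(1)] inj_onD[OF emb(1) _ that(1) \<open>j \<in> A\<close>] that(2) by (fastforce simp: M_def)
  text \<open>Both j and k are joined to all other vertices or to none, so they are twins.\<close>
  have adj_j: "thr_adj (s @ [b]) i j \<longleftrightarrow> t ! (M - 1)" if "i \<in> A" "i \<noteq> j" for i
    using emb(2)[OF that(1) \<open>j \<in> A\<close>] below_M[OF that] thr_adj_max by (simp add: M_def)
  have adj_k: "thr_adj (s @ [b]) i k \<longleftrightarrow> b" if "i \<in> A" "i \<noteq> k" for i
    using that thr_adj_snoc_last[of i s b] by (simp add: A_def k_def)
  have "t ! (M - 1) = b"
  proof (cases "j = k")
    case True
    then show ?thesis using adj_j[of 0] adj_k[of 0] \<open>0 \<in> A\<close> \<open>k \<noteq> 0\<close> by simp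
  next
    case False
    then show ?thesis using adj_j[of k] adj_k[of j] \<open>j \<in> A\<close> \<open>k \<in> A\<close> thr_adj_sym by metis
  qed
  define g where "g = f \<circ> transpose j k"
  have "thr_embedding (s @ [b]) t g"
    unfolding g_def
    by (rule thr_embedding_transpose_twins[OF assms])
      (use \<open>j \<in> A\<close> \<open>k \<in> A\<close> adj_j adj_k \<open>t ! (M - 1) = b\<close> in \<open>auto simp: A_def k_def\<close>)
  moreover have "g i < g k" if "i \<le> length s" for i
  proof -
    have "i \<in> A" "i \<noteq> k" using that by (simp_all add: A_def k_def)
    then have "transpose j k i \<in> A" "transpose j k i \<noteq> j"
      using \<open>j \<in> A\<close> \<open>k \<in> A\<close> by (auto simp: transpose_def)
    then show ?thesis using below_M by (simp add: g_def M_def)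
  qed
  moreover have "g k = M" by (simp add: g_def M_def)
  ultimately show thesis
    using that \<open>t ! (M - 1) = b\<close> by (simp add: k_def)
qed

lemma thr_embedding_snocE:
  assumes "thr_embedding (s @ [b]) t f"
  obtains M g where "0 < M" and "M \<le> length t" and "t ! (M - 1) = b"
    and "thr_embedding s (take (M - 1) t) g"
proof -
  obtain g where g: "thr_embedding (s @ [b]) t g"
    "\<And>i. i \<le> length s \<Longrightarrow> g i < g (Suc (length s))" "t ! (g (Suc (length s)) - 1) = b"
    using thr_embedding_last_to_max[OF assms] by blast
  define M where "M = g (Suc (length s))"
  have "0 < M" using g(2)[of 0] by (simp add: M_def)
  moreover have "M \<le> length t"
    using g(1) unfolding thr_embedding_def M_def by (auto simp: image_subset_iff)
  moreover have "thr_embedding s (take (M - 1) t) g"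
  proof (rule thr_embedding_take)
    show "thr_embedding s t g" using g(1) by (rule thr_embedding_butlast)
    show "g ` {0..length s} \<subseteq> {0..M - 1}" using g(2) by (fastforce simp: M_def)
  qed
  ultimately show thesis using that g(3) by (simp add: M_def)
qed

lemma thr_embedding_imp_subseq: "thr_embedding s t f \<Longrightarrow> subseq s t"
proof (induction s arbitrary: f t rule: rev_induct)
  case Nil
  then show ?case by simp
next
  case (snoc b s)
  then obtain M g where "0 < M" "M \<le> length t" "t ! (M - 1) = b"
    and emb: "thr_embedding s (take (M - 1) t) g"
    by (blast elim: thr_embedding_snocE)
  from emb have "subseq s (take (M - 1) t)" by (rule snoc.IH)
  moreover have "t = take (M - 1) t @ [b] @ drop M t"
    using \<open>0 < M\<close> \<open>M \<le> length t\<close> \<open>t ! (M - 1) = b\<close> id_take_nth_drop[of "M - 1" t] by simp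
  ultimately show ?case
    by (metis list_emb_append_mono subseq_order.order_refl subseq_rev_drop_many)
qed

lemma creation_seq_induced_subgraph_iso:
  assumes "creation_seq V E s"
  shows "induced_subgraph_iso {0..length s} (thr_adj s) V E"
    and "induced_subgraph_iso V E {0..length s} (thr_adj s)"
proof -
  obtain f where "bij_betw f {0..length s} V"
    and "\<forall>i\<in>{0..length s}. \<forall>j\<in>{0..length s}. thr_adj s i j \<longleftrightarrow> E (f i) (f j)"
    using assms unfolding creation_seq_def by auto
  then show "induced_subgraph_iso {0..length s} (thr_adj s) V E"
    and "induced_subgraph_iso V E {0..length s} (thr_adj s)"
    by (rule bij_betw_induced_subgraph_iso)+
qed

theorem mainTheorem1:
  fixes V :: "'a set" and E :: "'a \<Rightarrow> 'a \<Rightarrow> bool"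
    and W :: "'b set" and F :: "'b \<Rightarrow> 'b \<Rightarrow> bool"
    and s t :: "bool list"
  assumes "creation_seq V E s" and "creation_seq W F t"
  shows "induced_subgraph_iso V E W F \<longleftrightarrow> subseq s t"
proof -
  note s_iso = creation_seq_induced_subgraph_iso[OF assms(1)]
  note t_iso = creation_seq_induced_subgraph_iso[OF assms(2)]
  have "induced_subgraph_iso V E W F \<longleftrightarrow>
      induced_subgraph_iso {0..length s} (thr_adj s) {0..length t} (thr_adj t)"
  proof
    assume "induced_subgraph_iso V E W F"
    then show "induced_subgraph_iso {0..length s} (thr_adj s) {0..length t} (thr_adj t)"
      by (rule induced_subgraph_iso_trans[OF s_iso(1) induced_subgraph_iso_trans[OF _ t_iso(2)]])
  next
    assume "induced_subgraph_iso {0..length s} (thr_adj s) {0..length t} (thr_adj t)"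
    then show "induced_subgraph_iso V E W F"
      by (rule induced_subgraph_iso_trans[OF s_iso(2) induced_subgraph_iso_trans[OF _ t_iso(1)]])
  qed
  also have "\<dots> \<longleftrightarrow> subseq s t"
    unfolding induced_subgraph_iso_thr_iff
    using subseq_imp_thr_embedding thr_embedding_imp_subseq by blast
  finally show ?thesis .
qed

end
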